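(* Let $p$ be a prime, $k, r \geq 1$, $G_1, \dots, G_k$ finite-dimensional vector spaces over $\mathbb{F}_p$, $G^{\oplus} = G_1 \oplus \cdots \oplus G_k$ with each $G_i$ regarded as a subspace of $G^{\oplus}$, and $f \colon G^{\oplus} \to \mathbb{D}$. Let $\xi > 0$ and let $\psi \colon (G^{\oplus})^{r-1} \times G_1 \times \cdots \times G_k \to \mathbb{F}_p$ be a multilinear form such that \[\mathbb{E}_{a^{(1)}, \dots, a^{(r-1)} \in G^{\oplus},\ d_1 \in G_1, \dots, d_k \in G_k,\ x \in G^{\oplus}}\ \partial_{a^{(1)}} \cdots \partial_{a^{(r-1)}} \partial_{d_1} \cdots \partial_{d_k} f(x)\, \omega^{\psi(a^{(1)}, \dots, a^{(r-1)}, d_1, \dots, d_k)} \geq \xi,\] where $d_i \in G_i$ is viewed in $G^{\oplus}$. Let $i < j$ be elements of $[r-1]$ and define the multilinear form $\psi_{ij} \colon (G^{\oplus})^{r-1} \times G_1 \times \cdots \times G_k \to \mathbb{F}_p$ by $\psi_{ij}(a^{(1)}, \dots, a^{(r-1)}, d_1, \dots, d_k) = \psi(a^{(1)}, \dots, a^{(r-1)}, d_1, \dots, d_k) - \psi(\tilde a^{(1)}, \dots, \tilde a^{(r-1)}, d_1, \dots, d_k)$, where $(\tilde a^{(1)}, \dots, \tilde a^{(r-1)})$ is obtained from $(a^{(1)}, \dots, a^{(r-1)})$ by swapping $a^{(i)}$ and $a^{(j)}$. Then $\operatorname{bias} \psi_{ij} \geq \xi^8$.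
   Context: $\mathbb{D} = \{z \in \mathbb{C} : |z| \leq 1\}$, $\omega = e^{2\pi i/p}$, $\mathbb{E}$ is the uniform average, $\partial_u f(x) = f(x+u)\overline{f(x)}$. For a multilinear form $\alpha$ on a product $V_1 \times \cdots \times V_s$ of $\mathbb{F}_p$-vector spaces, $\operatorname{bias}\alpha = \mathbb{E}_{v_1 \in V_1, \dots, v_s \in V_s} \omega^{\alpha(v_1, \dots, v_s)}$. *)

theory Defs
  imports "HOL-Analysis.Analysis" "HOL-Combinatorics.Transposition"
          "Berlekamp_Zassenhaus.Finite_Field"
begin

text \<open>The prime field F_p is the type 'p mod_ring with 'p of class prime_card,
  so p = CARD('p).  The space G_1 + ... + G_k is modelled in coordinates:
  a vector is a function from coordinate indices (i, c) to F_p; block i (i < k)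
  has dims i coordinates, and vectors vanish outside the coordinate set.\<close>

type_synonym 'p vec = "nat \<times> nat \<Rightarrow> 'p mod_ring"

definition coords :: "nat \<Rightarrow> (nat \<Rightarrow> nat) \<Rightarrow> (nat \<times> nat) set" where
  "coords k dims = {(i, c). i < k \<and> c < dims i}"

definition supp_space :: "(nat \<times> nat) set \<Rightarrow> 'p::prime_card vec set" where
  "supp_space S = {x. \<forall>j. j \<notin> S \<longrightarrow> x j = 0}"

definition Gsum :: "nat \<Rightarrow> (nat \<Rightarrow> nat) \<Rightarrow> 'p::prime_card vec set" where
  "Gsum k dims = supp_space (coords k dims)"

definition Gblock :: "(nat \<Rightarrow> nat) \<Rightarrow> nat \<Rightarrow> 'p::prime_card vec set" where
  "Gblock dims i = supp_space {(i, c) | c. c < dims i}"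

definition vadd :: "'p::prime_card vec \<Rightarrow> 'p vec \<Rightarrow> 'p vec" where
  "vadd x y = (\<lambda>j. x j + y j)"

definition vscale :: "'p::prime_card mod_ring \<Rightarrow> 'p vec \<Rightarrow> 'p vec" where
  "vscale c x = (\<lambda>j. c * x j)"

definition avg :: "'a set \<Rightarrow> ('a \<Rightarrow> complex) \<Rightarrow> complex" where
  "avg S g = (\<Sum>x\<in>S. g x) / of_nat (card S)"

definition omega_pow :: "'p::prime_card mod_ring \<Rightarrow> complex" where
  "omega_pow t = exp (2 * pi * \<i> / of_nat CARD('p)) ^ nat (to_int_mod_ring t)"

definition mderiv :: "'p::prime_card vec \<Rightarrow> ('p vec \<Rightarrow> complex) \<Rightarrow> 'p vec \<Rightarrow> complex" where
  "mderiv u f = (\<lambda>x. f (vadd x u) * cnj (f x))"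

fun mderivs :: "'p::prime_card vec list \<Rightarrow> ('p vec \<Rightarrow> complex) \<Rightarrow> 'p vec \<Rightarrow> complex" where
  "mderivs [] f = f"
| "mderivs (u # us) f = mderiv u (mderivs us f)"

text \<open>Domain of the form: a = (a_0, ..., a_(r-2)) in (G^oplus)^(r-1) and
  d = (d_0, ..., d_(k-1)) with d_i in G_i (extensional tuples).\<close>
definition Adom :: "nat \<Rightarrow> nat \<Rightarrow> (nat \<Rightarrow> nat) \<Rightarrow> (nat \<Rightarrow> 'p::prime_card vec) set" where
  "Adom r k dims = PiE {..<r-1} (\<lambda>_. Gsum k dims)"

definition Ddom :: "nat \<Rightarrow> (nat \<Rightarrow> nat) \<Rightarrow> (nat \<Rightarrow> 'p::prime_card vec) set" where
  "Ddom k dims = PiE {..<k} (\<lambda>i. Gblock dims i)"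

definition multilinear_form ::
  "nat \<Rightarrow> nat \<Rightarrow> (nat \<Rightarrow> nat) \<Rightarrow> ((nat \<Rightarrow> 'p::prime_card vec) \<Rightarrow> (nat \<Rightarrow> 'p vec) \<Rightarrow> 'p mod_ring) \<Rightarrow> bool" where
  "multilinear_form r k dims psi \<longleftrightarrow>
     (\<forall>a\<in>Adom r k dims. \<forall>d\<in>Ddom k dims.
        (\<forall>m<r-1. \<forall>u\<in>Gsum k dims. \<forall>v\<in>Gsum k dims. \<forall>c.
           psi (a(m := vadd u v)) d = psi (a(m := u)) d + psi (a(m := v)) d \<and>
           psi (a(m := vscale c u)) d = c * psi (a(m := u)) d) \<and>
        (\<forall>m<k. \<forall>u\<in>Gblock dims m. \<forall>v\<in>Gblock dims m. \<forall>c.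
           psi a (d(m := vadd u v)) = psi a (d(m := u)) + psi a (d(m := v)) \<and>
           psi a (d(m := vscale c u)) = c * psi a (d(m := u))))"

definition bias ::
  "nat \<Rightarrow> nat \<Rightarrow> (nat \<Rightarrow> nat) \<Rightarrow> ((nat \<Rightarrow> 'p::prime_card vec) \<Rightarrow> (nat \<Rightarrow> 'p vec) \<Rightarrow> 'p mod_ring) \<Rightarrow> complex" where
  "bias r k dims psi = avg (Adom r k dims) (\<lambda>a. avg (Ddom k dims) (\<lambda>d. omega_pow (psi a d)))"

end

(*
  Freeze every argument of psi except a_i = u and a_j = v.  The frozen form
  beta(u, v) = psi(..., u, ..., v, ...) is biadditive, and with g the derivative of f
  in the remaining directions the hypothesis averages
    Phi = E_{u,v,x} d_u d_v g(x) omega^beta(u,v),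
  while the bias of psi_ij averages E_{u,v} omega^(beta(u,v) - beta(v,u)) = |K| / |G|,
  where K is the kernel of the alternating form beta(u,v) - beta(v,u).
  Substituting y = x + u, z = x + v writes Phi as a sum over (y, z) of
  conj g(y) conj g(z) T(y, z); one Cauchy-Schwarz in (y, z) and an expansion of
  sum |T|^2 give |Phi|^2 <= |K| / |G|.  Cauchy-Schwarz over the frozen arguments then
  yields xi^2 <= bias psi_ij <= 1, hence xi^8 <= bias psi_ij.
*)

theory Submission
  imports Defs "HOL-Library.Function_Algebras" "HOL-Library.Real_Mod"
begin

lemma omega_pow_cis:
  "omega_pow (t::'p::prime_card mod_ring) = cis (2 * pi * to_int_mod_ring t / CARD('p))"
proof -
  have t_nonneg: "0 \<le> to_int_mod_ring t"
    using range_to_int_mod_ring[where 'a='p] by auto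
  have "omega_pow t = cis (2 * pi / CARD('p)) ^ nat (to_int_mod_ring t)"
    by (simp add: omega_pow_def cis_conv_exp mult.commute)
  also have "\<dots> = cis (real (nat (to_int_mod_ring t)) * (2 * pi / CARD('p)))"
    by (rule Complex.DeMoivre)
  also have "\<dots> = cis (2 * pi * to_int_mod_ring t / CARD('p))"
    using t_nonneg by (simp add: mult_ac)
  finally show ?thesis .
qed

lemma omega_pow_add: "omega_pow (a + b) = omega_pow a * omega_pow (b::'p::prime_card mod_ring)"
proof -
  define s where "s = to_int_mod_ring a + to_int_mod_ring b"
  define q where "q = s div CARD('p)"
  have p: "real CARD('p) > 0" by simp
  have "s = q * CARD('p) + to_int_mod_ring (a + b)"
    by (simp add: s_def q_def to_int_mod_ring_add)
  then have "real_of_int s = of_int q * CARD('p) + to_int_mod_ring (a + b)"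
    by simp
  then have "2 * pi * s / CARD('p) =
      2 * pi * of_int q + 2 * pi * to_int_mod_ring (a + b) / CARD('p)"
    using p by (simp add: field_simps)
  then have "cis (2 * pi * s / CARD('p)) = omega_pow (a + b)"
    by (simp add: omega_pow_cis cis_mult[symmetric])
  then show ?thesis
    by (simp add: omega_pow_cis s_def cis_mult add_divide_distrib distrib_left)
qed

lemma omega_pow_0 [simp]: "omega_pow (0::'p::prime_card mod_ring) = 1"
  by (simp add: omega_pow_def)

lemma norm_omega_pow [simp]: "norm (omega_pow (t::'p::prime_card mod_ring)) = 1"
  by (simp add: omega_pow_cis)

lemma omega_pow_diff:
  "omega_pow (a - b) = omega_pow a * cnj (omega_pow (b::'p::prime_card mod_ring))"
proof -
  have "omega_pow b * cnj (omega_pow b) = 1"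
    by (simp flip: complex_norm_square)
  then have "omega_pow (a - b) = omega_pow (a - b) * omega_pow b * cnj (omega_pow b)"
    by (simp add: mult.assoc)
  then show ?thesis
    by (simp flip: omega_pow_add)
qed

lemma omega_pow_eq_1_iff: "omega_pow (t::'p::prime_card mod_ring) = 1 \<longleftrightarrow> t = 0"
proof
  assume "omega_pow t = 1"
  then obtain n :: int where "2 * pi * to_int_mod_ring t / CARD('p) = n * (2 * pi)"
    by (auto simp: omega_pow_cis cis_eq_1_iff)
  then have "real_of_int (to_int_mod_ring t) = real_of_int (n * CARD('p))"
    by (simp add: field_simps)
  then have "to_int_mod_ring t = n * CARD('p)"
    by (simp only: of_int_eq_iff)
  moreover have "0 \<le> to_int_mod_ring t" "to_int_mod_ring t < CARD('p)"
    using range_to_int_mod_ring[where 'a='p] by auto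
  ultimately have "to_int_mod_ring t = 0"
    by (smt (verit) mult_less_cancel_right2 mult_nonneg_nonpos of_nat_0_le_iff zero_less_mult_iff)
  then show "t = 0"
    by (metis of_int_mod_ring_to_int_mod_ring of_int_mod_ring_hom.hom_zero)
qed simp

lemma avg_cong [cong]: "S = S' \<Longrightarrow> (\<And>x. x \<in> S' \<Longrightarrow> f x = g x) \<Longrightarrow> avg S f = avg S' g"
  unfolding avg_def by (metis sum.cong)

lemma avg_swap: "avg S (\<lambda>x. avg T (\<lambda>y. h x y)) = avg T (\<lambda>y. avg S (\<lambda>x. h x y))"
  unfolding avg_def by (simp add: sum_divide_distrib[symmetric] sum.swap[of _ S] mult.commute)

lemma Re_avg: "Re (avg S h) = (\<Sum>x\<in>S. Re (h x)) / card S"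
  by (simp add: avg_def)

lemma Im_avg: "Im (avg S h) = (\<Sum>x\<in>S. Im (h x)) / card S"
  by (simp add: avg_def)

lemma norm_avg_le_1:
  assumes "\<And>x. x \<in> S \<Longrightarrow> norm (h x) \<le> 1"
  shows "norm (avg S h) \<le> 1"
proof -
  have "norm (\<Sum>x\<in>S. h x) \<le> card S"
    using order_trans[OF norm_sum sum_mono[of S "\<lambda>x. norm (h x)" "\<lambda>_. 1"]] assms by simp
  then show ?thesis
    by (auto simp: avg_def norm_divide divide_le_eq_1)
qed

lemma norm_avg_sq_le:
  assumes "\<And>x. x \<in> S \<Longrightarrow> norm (h x)^2 \<le> Re (q x)"
  shows "norm (avg S h)^2 \<le> Re (avg S q)"
proof -
  have "norm (avg S h)^2 \<le> (\<Sum>x\<in>S. norm (h x))^2 / card S ^ 2"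
    by (simp add: avg_def norm_divide power_divide divide_right_mono norm_sum power_mono)
  also have "\<dots> \<le> (\<Sum>x\<in>S. norm (h x)^2) * card S / card S ^ 2"
    by (intro divide_right_mono sum_squared_le_sum_of_squares) simp
  also have "\<dots> \<le> (\<Sum>x\<in>S. Re (q x)) / card S"
    using assms
    by (cases "card S = 0") (auto simp: power2_eq_square intro!: divide_right_mono sum_mono)
  finally show ?thesis
    by (simp add: Re_avg)
qed

lemma avg_PiE_resample:
  fixes S :: "'i \<Rightarrow> 'x set"
  assumes "m \<in> I" "finite (S m)"
  shows "avg (PiE I S) F = avg (PiE I S) (\<lambda>a. avg (S m) (\<lambda>t. F (a(m := t))))"
proof (cases "S m = {}")
  case True
  with assms have "PiE I S = {}" by (auto simp: PiE_eq_empty_iff)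
  then show ?thesis by (simp add: avg_def)
next
  case False
  define P where "P = PiE I S"
  define \<phi> :: "('i \<Rightarrow> 'x) \<times> 'x \<Rightarrow> ('i \<Rightarrow> 'x) \<times> 'x" where "\<phi> = (\<lambda>(a, t). (a(m := t), a m))"
  have \<phi>_mem: "\<phi> p \<in> P \<times> S m" and \<phi>_invol: "\<phi> (\<phi> p) = p" if "p \<in> P \<times> S m" for p
    using that assms PiE_fun_upd[of _ S m _ I] by (auto simp: \<phi>_def P_def insert_absorb)
  have "(\<Sum>a\<in>P. \<Sum>t\<in>S m. F (a(m := t))) = (\<Sum>p\<in>P \<times> S m. F (fst (\<phi> p)))"
    by (simp add: \<phi>_def sum.cartesian_product case_prod_beta)
  also have "\<dots> = (\<Sum>p\<in>P \<times> S m. F (fst p))"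
    by (rule sum.reindex_bij_witness[where i=\<phi> and j=\<phi>]) (auto simp: \<phi>_mem \<phi>_invol)
  also have "\<dots> = card (S m) * (\<Sum>a\<in>P. F a)"
    by (simp add: sum.cartesian_product' sum_distrib_left)
  finally show ?thesis
    using False assms(2) by (simp add: avg_def P_def sum_divide_distrib[symmetric])
qed

lemma sum_sum_squared_le:
  fixes f :: "'a \<Rightarrow> 'b \<Rightarrow> real"
  shows "(\<Sum>y\<in>A. \<Sum>z\<in>B. f y z)^2 \<le> card A * card B * (\<Sum>y\<in>A. \<Sum>z\<in>B. (f y z)^2)"
  using sum_squared_le_sum_of_squares[of "\<lambda>(y, z). f y z" "A \<times> B"]
  by (simp add: sum.cartesian_product case_prod_beta card_cartesian_product mult.commute)

locale finite_add_subgroup =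
  fixes G :: "'a::ab_group_add set"
  assumes finite [simp, intro]: "finite G"
    and zero_mem [simp, intro]: "0 \<in> G"
    and diff_mem [simp, intro]: "x \<in> G \<Longrightarrow> y \<in> G \<Longrightarrow> x - y \<in> G"
begin

lemma uminus_mem [simp, intro]: "x \<in> G \<Longrightarrow> - x \<in> G"
  using diff_mem[of 0 x] by simp

lemma add_mem [simp, intro]: "x \<in> G \<Longrightarrow> y \<in> G \<Longrightarrow> x + y \<in> G"
  using diff_mem[of x "- y"] by simp

lemma card_pos: "card G > 0"
  by (auto simp: card_gt_0_iff)

lemma sum_translate: "a \<in> G \<Longrightarrow> (\<Sum>x\<in>G. F (x - a)) = (\<Sum>x\<in>G. F x)"
  by (rule sum.reindex_bij_witness[where i="\<lambda>x. x + a" and j="\<lambda>x. x - a"]) auto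

lemma sum_character:
  assumes additive: "\<And>x y. x \<in> G \<Longrightarrow> y \<in> G \<Longrightarrow> \<gamma> (x + y) = \<gamma> x + \<gamma> y"
  shows "(\<Sum>x\<in>G. omega_pow (\<gamma> x :: 'p::prime_card mod_ring)) = (if \<forall>x\<in>G. \<gamma> x = 0 then card G else 0)"
proof (cases "\<forall>x\<in>G. \<gamma> x = 0")
  case False
  then obtain a where a: "a \<in> G" "\<gamma> a \<noteq> 0" by blast
  define S where "S = (\<Sum>x\<in>G. omega_pow (\<gamma> x))"
  have "S = (\<Sum>x\<in>G. omega_pow (\<gamma> (x + a)))"
    unfolding S_def using sum_translate[of "- a" "\<lambda>x. omega_pow (\<gamma> x)"] a by simp
  also have "\<dots> = S * omega_pow (\<gamma> a)"
    using a by (simp add: S_def additive omega_pow_add sum_distrib_right)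
  finally have "S * (1 - omega_pow (\<gamma> a)) = 0" by (simp add: algebra_simps)
  with a show ?thesis by (auto simp: S_def omega_pow_eq_1_iff)
qed simp

lemma avg_eq_sum_div_card3:
  "avg G (\<lambda>v. avg G (\<lambda>u. avg G (\<lambda>x. h v u x))) = (\<Sum>v\<in>G. \<Sum>u\<in>G. \<Sum>x\<in>G. h v u x) / card G ^ 3"
  unfolding avg_def by (simp add: sum_divide_distrib power3_eq_cube mult_ac)

lemma sum_second_derivative_substitute:
  "(\<Sum>v\<in>G. \<Sum>u\<in>G. \<Sum>x\<in>G. g (x + u + v) * cnj (g (x + u)) * cnj (g (x + v)) * g x * w u v) =
   (\<Sum>y\<in>G. \<Sum>z\<in>G. cnj (g y) * cnj (g z) * (\<Sum>x\<in>G. g (y + z - x) * g x * w (y - x) (z - x)))"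
  (is "?lhs = _")
proof -
  define F where "F u v x = g (x + u + v) * cnj (g (x + u)) * cnj (g (x + v)) * g x * w u v"
    for u v x
  have "?lhs = (\<Sum>v\<in>G. \<Sum>x\<in>G. \<Sum>u\<in>G. F u v x)"
    unfolding F_def by (intro sum.cong refl sum.swap)
  also have "\<dots> = (\<Sum>x\<in>G. \<Sum>v\<in>G. \<Sum>u\<in>G. F u v x)"
    by (rule sum.swap)
  also have "\<dots> = (\<Sum>x\<in>G. \<Sum>z\<in>G. \<Sum>y\<in>G. F (y - x) (z - x) x)"
  proof (rule sum.cong[OF refl])
    fix x assume "x \<in> G"
    have "(\<Sum>v\<in>G. \<Sum>u\<in>G. F u v x) = (\<Sum>v\<in>G. \<Sum>y\<in>G. F (y - x) v x)"
      using \<open>x \<in> G\<close> by (intro sum.cong refl sum_translate[symmetric])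
    also have "\<dots> = (\<Sum>z\<in>G. \<Sum>y\<in>G. F (y - x) (z - x) x)"
      using \<open>x \<in> G\<close> by (rule sum_translate[symmetric])
    finally show "(\<Sum>v\<in>G. \<Sum>u\<in>G. F u v x) = (\<Sum>z\<in>G. \<Sum>y\<in>G. F (y - x) (z - x) x)" .
  qed
  also have "\<dots> = (\<Sum>z\<in>G. \<Sum>x\<in>G. \<Sum>y\<in>G. F (y - x) (z - x) x)"
    by (rule sum.swap)
  also have "\<dots> = (\<Sum>z\<in>G. \<Sum>y\<in>G. \<Sum>x\<in>G. F (y - x) (z - x) x)"
    by (intro sum.cong refl sum.swap)
  also have "\<dots> = (\<Sum>y\<in>G. \<Sum>z\<in>G. \<Sum>x\<in>G. F (y - x) (z - x) x)"
    by (rule sum.swap)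
  finally show ?thesis
    by (simp add: F_def sum_distrib_left algebra_simps)
qed

end

locale biadditive_form = finite_add_subgroup G for G :: "'a::ab_group_add set" +
  fixes \<beta> :: "'a \<Rightarrow> 'a \<Rightarrow> 'p::prime_card mod_ring"
  assumes add_left: "u \<in> G \<Longrightarrow> v \<in> G \<Longrightarrow> w \<in> G \<Longrightarrow> \<beta> (u + v) w = \<beta> u w + \<beta> v w"
    and add_right: "u \<in> G \<Longrightarrow> v \<in> G \<Longrightarrow> w \<in> G \<Longrightarrow> \<beta> w (u + v) = \<beta> w u + \<beta> w v"
begin

lemma diff_left: "u \<in> G \<Longrightarrow> v \<in> G \<Longrightarrow> w \<in> G \<Longrightarrow> \<beta> (u - v) w = \<beta> u w - \<beta> v w"
  using add_left[of "u - v" v w] by (simp add: eq_diff_eq)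

lemma diff_right: "u \<in> G \<Longrightarrow> v \<in> G \<Longrightarrow> w \<in> G \<Longrightarrow> \<beta> w (u - v) = \<beta> w u - \<beta> w v"
  using add_right[of "u - v" v w] by (simp add: eq_diff_eq)

lemma minus_left: "u \<in> G \<Longrightarrow> w \<in> G \<Longrightarrow> \<beta> (- u) w = - \<beta> u w"
  using diff_left[of 0 u w] diff_left[of 0 0 w] by simp

definition alt_kernel :: "'a set" where
  "alt_kernel = {v \<in> G. \<forall>y\<in>G. \<beta> y v = \<beta> v y}"

lemma sum_alt_character:
  assumes "v \<in> G"
  shows "(\<Sum>u\<in>G. omega_pow (\<beta> u v - \<beta> v u)) = (if v \<in> alt_kernel then of_nat (card G) else 0)"
  using assms by (subst sum_character) (auto simp: add_left add_right alt_kernel_def)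

lemma avg_alt_character:
  "avg G (\<lambda>v. avg G (\<lambda>u. omega_pow (\<beta> u v - \<beta> v u))) = of_real (card alt_kernel / card G)"
proof -
  have "avg G (\<lambda>u. omega_pow (\<beta> u v - \<beta> v u)) = of_bool (v \<in> alt_kernel)" if "v \<in> G" for v
    using that card_pos by (auto simp: avg_def sum_alt_character)
  then have "avg G (\<lambda>v. avg G (\<lambda>u. omega_pow (\<beta> u v - \<beta> v u))) =
      avg G (\<lambda>v. of_bool (v \<in> alt_kernel))"
    by simp
  also have "\<dots> = of_real (card alt_kernel / card G)"
    by (simp add: avg_def alt_kernel_def Int_def)
  finally show ?thesis .
qed

lemma omega_pow_twist_product:
  assumes "s \<in> G" "x \<in> G" "x' \<in> G" "y \<in> G"
  shows "omega_pow (\<beta> (y - x) (s - y - x)) * cnj (omega_pow (\<beta> (y - x') (s - y - x'))) =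
    omega_pow (\<beta> (- x) (s - x)) * cnj (omega_pow (\<beta> (- x') (s - x'))) *
    omega_pow (\<beta> y (x' - x) - \<beta> (x' - x) y)"
proof -
  have "\<beta> (y - x) (s - y - x) - \<beta> (y - x') (s - y - x') =
    \<beta> (- x) (s - x) - \<beta> (- x') (s - x') + (\<beta> y (x' - x) - \<beta> (x' - x) y)"
    using assms by (simp add: add_left add_right diff_left diff_right minus_left algebra_simps)
  then show ?thesis
    by (simp flip: omega_pow_diff omega_pow_add)
qed

definition twisted_term :: "('a \<Rightarrow> complex) \<Rightarrow> 'a \<Rightarrow> 'a \<Rightarrow> 'a \<Rightarrow> complex" where
  "twisted_term g y z x = g (y + z - x) * g x * omega_pow (\<beta> (y - x) (z - x))"

lemma twisted_term_product:
  assumes "s \<in> G" "x \<in> G" "x' \<in> G" "y \<in> G"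
  shows "twisted_term g y (s - y) x * cnj (twisted_term g y (s - y) x') =
    twisted_term g 0 s x * cnj (twisted_term g 0 s x') * omega_pow (\<beta> y (x' - x) - \<beta> (x' - x) y)"
  using omega_pow_twist_product[OF assms] by (simp add: twisted_term_def algebra_simps)

(* After the substitution z = s - y, bilinearity confines the dependence on y to the
   alternating phase of twisted_term_product; summing that phase over y gives |G| times
   the indicator of the kernel. *)

lemma sum_sq_norm_twisted_sums_eq:
  "of_real (\<Sum>y\<in>G. \<Sum>z\<in>G. norm (\<Sum>x\<in>G. twisted_term g y z x)^2) =
   (\<Sum>s\<in>G. \<Sum>x\<in>G. \<Sum>x'\<in>G. twisted_term g 0 s x * cnj (twisted_term g 0 s x') *
      (if x' - x \<in> alt_kernel then of_nat (card G) else 0))"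
proof -
  define c where "c = twisted_term g"
  have "of_real (\<Sum>y\<in>G. \<Sum>z\<in>G. norm (\<Sum>x\<in>G. c y z x)^2) =
      (\<Sum>y\<in>G. \<Sum>z\<in>G. \<Sum>x\<in>G. \<Sum>x'\<in>G. c y z x * cnj (c y z x'))"
    by (simp only: of_real_sum complex_norm_square) (simp add: cnj_sum sum_product)
  also have "\<dots> = (\<Sum>y\<in>G. \<Sum>s\<in>G. \<Sum>x\<in>G. \<Sum>x'\<in>G. c y (s - y) x * cnj (c y (s - y) x'))"
    by (rule sum.cong[OF refl], rule sum_translate[symmetric])
  also have "\<dots> = (\<Sum>s\<in>G. \<Sum>y\<in>G. \<Sum>x\<in>G. \<Sum>x'\<in>G. c y (s - y) x * cnj (c y (s - y) x'))"
    by (rule sum.swap)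
  also have "\<dots> = (\<Sum>s\<in>G. \<Sum>x\<in>G. \<Sum>y\<in>G. \<Sum>x'\<in>G. c y (s - y) x * cnj (c y (s - y) x'))"
    by (rule sum.cong[OF refl], rule sum.swap)
  also have "\<dots> = (\<Sum>s\<in>G. \<Sum>x\<in>G. \<Sum>x'\<in>G. \<Sum>y\<in>G. c y (s - y) x * cnj (c y (s - y) x'))"
    by (rule sum.cong[OF refl], rule sum.cong[OF refl], rule sum.swap)
  also have "\<dots> = (\<Sum>s\<in>G. \<Sum>x\<in>G. \<Sum>x'\<in>G. c 0 s x * cnj (c 0 s x') *
      (\<Sum>y\<in>G. omega_pow (\<beta> y (x' - x) - \<beta> (x' - x) y)))"
    by (intro sum.cong refl) (simp add: c_def twisted_term_product sum_distrib_left)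
  finally show ?thesis
    by (simp add: c_def sum_alt_character)
qed

lemma sum_sq_norm_twisted_sums_le:
  assumes g_le: "\<And>x. x \<in> G \<Longrightarrow> norm (g x) \<le> 1"
  shows "(\<Sum>y\<in>G. \<Sum>z\<in>G. norm (\<Sum>x\<in>G. twisted_term g y z x)^2) \<le> real (card G) ^ 3 * card alt_kernel"
proof -
  define \<kappa> where "\<kappa> h = (if h \<in> alt_kernel then real (card G) else 0)" for h
  have summand_le: "norm (twisted_term g 0 s x * cnj (twisted_term g 0 s x') *
      (if x' - x \<in> alt_kernel then of_nat (card G) else 0)) \<le> \<kappa> (x' - x)"
    if "s \<in> G" "x \<in> G" "x' \<in> G" for s x x'
  proof -
    have "norm (twisted_term g y s x) \<le> 1" if "y \<in> G" "x \<in> G" for y x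
      using that \<open>s \<in> G\<close> g_le by (simp add: twisted_term_def norm_mult mult_le_one)
    then have "norm (twisted_term g 0 s x) * norm (twisted_term g 0 s x') \<le> 1"
      using that by (intro mult_le_one) auto
    then show ?thesis
      by (auto simp: \<kappa>_def norm_mult intro: mult_left_le_one_le)
  qed
  have "(\<Sum>y\<in>G. \<Sum>z\<in>G. norm (\<Sum>x\<in>G. twisted_term g y z x)^2) =
      norm (of_real (\<Sum>y\<in>G. \<Sum>z\<in>G. norm (\<Sum>x\<in>G. twisted_term g y z x)^2) :: complex)"
    unfolding norm_of_real by (intro abs_of_nonneg[symmetric] sum_nonneg) simp_all
  also have "\<dots> \<le> (\<Sum>s\<in>G. \<Sum>x\<in>G. \<Sum>x'\<in>G. \<kappa> (x' - x))"
    unfolding sum_sq_norm_twisted_sums_eq by (intro order_trans[OF norm_sum] sum_mono summand_le)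
  also have "\<dots> = (\<Sum>s\<in>G. \<Sum>x\<in>G. \<Sum>h\<in>G. \<kappa> h)"
    by (intro sum.cong refl sum_translate)
  also have "\<dots> = real (card G) ^ 3 * card alt_kernel"
    by (simp add: \<kappa>_def alt_kernel_def Int_def power3_eq_cube flip: sum.inter_filter)
  finally show ?thesis .
qed

lemma norm_avg_twisted_second_derivative_sq_le:
  assumes g_le: "\<And>x. x \<in> G \<Longrightarrow> norm (g x) \<le> 1"
  shows "norm (avg G (\<lambda>v. avg G (\<lambda>u. avg G (\<lambda>x.
      g (x + u + v) * cnj (g (x + u)) * cnj (g (x + v)) * g x * omega_pow (\<beta> u v)))))^2
    \<le> card alt_kernel / card G"
proof -
  define N where "N = real (card G)"
  define T where "T y z = (\<Sum>x\<in>G. twisted_term g y z x)" for y z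
  define S where "S = (\<Sum>v\<in>G. \<Sum>u\<in>G. \<Sum>x\<in>G.
      g (x + u + v) * cnj (g (x + u)) * cnj (g (x + v)) * g x * omega_pow (\<beta> u v))"
  have "S = (\<Sum>y\<in>G. \<Sum>z\<in>G. cnj (g y) * cnj (g z) * T y z)"
    unfolding S_def T_def twisted_term_def by (rule sum_second_derivative_substitute)
  also have "norm \<dots> \<le> (\<Sum>y\<in>G. \<Sum>z\<in>G. norm (T y z))"
  proof (intro order_trans[OF norm_sum] sum_mono)
    fix y z assume "y \<in> G" "z \<in> G"
    then show "norm (cnj (g y) * cnj (g z) * T y z) \<le> norm (T y z)"
      using g_le by (simp add: norm_mult mult_le_one mult_left_le_one_le)
  qed
  finally have "norm S ^ 2 \<le> (\<Sum>y\<in>G. \<Sum>z\<in>G. norm (T y z))^2"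
    by (simp add: power_mono)
  also have "\<dots> \<le> N^2 * (\<Sum>y\<in>G. \<Sum>z\<in>G. norm (T y z)^2)"
    using sum_sum_squared_le[of "\<lambda>y z. norm (T y z)" G G] by (simp add: N_def power2_eq_square)
  also have "\<dots> \<le> N^2 * (N^3 * card alt_kernel)"
    unfolding T_def N_def by (intro mult_left_mono sum_sq_norm_twisted_sums_le g_le) simp_all
  finally have "norm S ^ 2 / N^6 \<le> N^2 * (N^3 * card alt_kernel) / N^6"
    by (simp add: divide_right_mono)
  also have "\<dots> = card alt_kernel / N"
    using card_pos by (simp add: N_def field_simps eval_nat_numeral)
  finally show ?thesis
    by (simp add: S_def N_def avg_eq_sum_div_card3 norm_divide norm_power power_divide
        flip: power_mult)
qed

end

lemma vadd_eq_plus: "vadd x y = x + y"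
  by (simp add: vadd_def plus_fun_def)

lemma mderiv_commute: "mderiv u (mderiv w h) = mderiv w (mderiv u h)"
  by (simp add: fun_eq_iff mderiv_def vadd_eq_plus add_ac mult_ac)

lemma mderivs_append_Cons: "mderivs (us @ w # ws) h = mderiv w (mderivs (us @ ws) h)"
  by (induction us) (simp_all add: mderiv_commute)

lemma mderiv_mderiv:
  "mderiv u (mderiv v h) x = h (x + u + v) * cnj (h (x + u)) * cnj (h (x + v)) * h x"
  by (simp add: mderiv_def vadd_eq_plus)

lemma norm_mderivs_le_1:
  assumes "\<And>x y. x \<in> G \<Longrightarrow> y \<in> G \<Longrightarrow> x + y \<in> G" "set us \<subseteq> G"
    and "\<And>x. x \<in> G \<Longrightarrow> norm (h x) \<le> 1" "x \<in> G"
  shows "norm (mderivs us h x) \<le> 1"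
  using assms(2,4)
proof (induction us arbitrary: x)
  case (Cons u us)
  then have "norm (mderivs us h (x + u)) \<le> 1" "norm (mderivs us h x) \<le> 1"
    using assms(1) by auto
  then show ?case
    by (simp add: mderiv_def vadd_eq_plus norm_mult mult_le_one)
qed (use assms(3) in simp)

lemma mderivs_map_upd_two:
  assumes "i < j" "j < n"
  shows "mderivs (map (a(j := v, i := u)) [0..<n] @ ds) h =
    mderiv u (mderiv v (mderivs (map a [m\<leftarrow>[0..<n]. m \<noteq> i \<and> m \<noteq> j] @ ds) h))"
proof -
  have app: "[l..<n] = [l..<m] @ [m..<n]" if "l \<le> m" "m \<le> n" for l m
    using that upt_add_eq_append[of l m "n - m"] by simp
  have "[0..<i] @ [i..<j] @ [j..<n] = [0..<n]"
    using assms by (simp flip: app)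
  then have split: "[0..<n] = [0..<i] @ i # [Suc i..<j] @ j # [Suc j..<n]"
    using assms upt_conv_Cons[of i j] upt_conv_Cons[of j n] by simp
  have "[m\<leftarrow>[0..<n]. m \<noteq> i \<and> m \<noteq> j] = [0..<i] @ [Suc i..<j] @ [Suc j..<n]"
    using assms by (subst split) (auto intro!: filter_True)
  moreover have "map (a(j := v, i := u)) [0..<n] =
      map a [0..<i] @ u # map a [Suc i..<j] @ v # map a [Suc j..<n]"
    using assms by (subst split) simp
  ultimately show ?thesis
    using mderivs_append_Cons[of "map a [0..<i]"]
      mderivs_append_Cons[of "map a [0..<i] @ map a [Suc i..<j]"]
    by simp
qed

lemma finite_add_subgroup_Gsum: "finite_add_subgroup (Gsum k dims :: 'p::prime_card vec set)"
proof
  let ?S = "coords k dims"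
  have "?S = Sigma {..<k} (\<lambda>i. {..<dims i})"
    by (auto simp: coords_def)
  then have "finite ?S"
    by simp
  then have "finite (PiE ?S (\<lambda>_. UNIV :: 'p mod_ring set))"
    by (simp add: finite_PiE)
  moreover have "inj_on (\<lambda>x. restrict x ?S) (Gsum k dims :: 'p vec set)"
  proof (rule inj_onI, rule ext)
    fix x y :: "'p vec" and c
    assume x: "x \<in> Gsum k dims" and y: "y \<in> Gsum k dims" and eq: "restrict x ?S = restrict y ?S"
    show "x c = y c"
    proof (cases "c \<in> ?S")
      case True
      then show ?thesis using fun_cong[OF eq, of c] by simp
    next
      case False
      with x y have "x c = 0" "y c = 0"
        unfolding Gsum_def supp_space_def by blast+
      then show ?thesis by simp
    qed
  qed
  ultimately show "finite (Gsum k dims :: 'p vec set)"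
    by (rule inj_on_finite[rotated 2]) auto
qed (auto simp: Gsum_def supp_space_def)

lemma Gblock_subset_Gsum: "m < k \<Longrightarrow> Gblock dims m \<subseteq> Gsum k dims"
  by (auto simp: Gblock_def Gsum_def supp_space_def coords_def)

lemma Adom_fun_upd: "a \<in> Adom r k dims \<Longrightarrow> m < r - 1 \<Longrightarrow> u \<in> Gsum k dims \<Longrightarrow> a(m := u) \<in> Adom r k dims"
  unfolding Adom_def using PiE_fun_upd[of u "\<lambda>_. Gsum k dims" m a "{..<r-1}"]
  by (simp add: insert_absorb)

lemma Ddom_mem: "d \<in> Ddom k dims \<Longrightarrow> m < k \<Longrightarrow> d m \<in> Gsum k dims"
  unfolding Ddom_def using Gblock_subset_Gsum PiE_mem by fastforce

lemma Adom_mem: "a \<in> Adom r k dims \<Longrightarrow> m < r - 1 \<Longrightarrow> a m \<in> Gsum k dims"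
  unfolding Adom_def by auto

lemma biadditive_form_slice:
  fixes \<psi> :: "(nat \<Rightarrow> 'p::prime_card vec) \<Rightarrow> (nat \<Rightarrow> 'p vec) \<Rightarrow> 'p mod_ring"
  assumes \<psi>: "multilinear_form r k dims \<psi>" and a: "a \<in> Adom r k dims" and d: "d \<in> Ddom k dims"
    and ij: "i < r - 1" "j < r - 1" "i \<noteq> j"
  shows "biadditive_form (Gsum k dims) (\<lambda>u v. \<psi> (a(j := v, i := u)) d)"
proof -
  interpret finite_add_subgroup "Gsum k dims :: 'p vec set"
    by (rule finite_add_subgroup_Gsum)
  have additive: "\<psi> (b(m := u + v)) d = \<psi> (b(m := u)) d + \<psi> (b(m := v)) d"
    if "b \<in> Adom r k dims" "m < r - 1" "u \<in> Gsum k dims" "v \<in> Gsum k dims" for b m u v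
  proof -
    have "\<forall>m<r-1. \<forall>u\<in>Gsum k dims. \<forall>v\<in>Gsum k dims.
        \<psi> (b(m := vadd u v)) d = \<psi> (b(m := u)) d + \<psi> (b(m := v)) d"
      using \<psi> that(1) d unfolding multilinear_form_def by blast
    with that show ?thesis by (simp add: vadd_eq_plus)
  qed
  show ?thesis
  proof
    fix u v w :: "'p vec" assume uvw: "u \<in> Gsum k dims" "v \<in> Gsum k dims" "w \<in> Gsum k dims"
    then have aj: "a(j := w) \<in> Adom r k dims" and ai: "a(i := w) \<in> Adom r k dims"
      using a ij by (auto intro: Adom_fun_upd)
    show "\<psi> (a(j := w, i := u + v)) d = \<psi> (a(j := w, i := u)) d + \<psi> (a(j := w, i := v)) d"
      using aj ij(1) uvw(1,2) by (rule additive)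
    have twist: "a(j := x, i := w) = a(i := w, j := x)" for x
      using ij(3) by (rule fun_upd_twist[symmetric])
    show "\<psi> (a(j := u + v, i := w)) d = \<psi> (a(j := u, i := w)) d + \<psi> (a(j := v, i := w)) d"
      unfolding twist using ai ij(2) uvw(1,2) by (rule additive)
  qed
qed

lemma avg_Adom_resample_pair:
  assumes "i < r - 1" "j < r - 1" "i \<noteq> j"
  shows "avg (Adom r k dims) (\<lambda>a. avg (Ddom k dims) (\<lambda>d. X a d)) =
    avg (Adom r k dims) (\<lambda>a. avg (Ddom k dims) (\<lambda>d. avg (Gsum k dims) (\<lambda>v. avg (Gsum k dims) (\<lambda>u.
      X (a(j := v, i := u)) d))))"
proof -
  interpret finite_add_subgroup "Gsum k dims :: 'p::prime_card vec set"
    by (rule finite_add_subgroup_Gsum)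
  define H where "H a = avg (Ddom k dims) (\<lambda>d. X a d)" for a
  have "avg (Adom r k dims) H = avg (Adom r k dims) (\<lambda>a. avg (Gsum k dims) (\<lambda>u. H (a(i := u))))"
    using assms unfolding Adom_def by (intro avg_PiE_resample) auto
  also have "\<dots> = avg (Adom r k dims) (\<lambda>a. avg (Gsum k dims) (\<lambda>v. avg (Gsum k dims) (\<lambda>u.
      H (a(j := v, i := u)))))"
    using assms unfolding Adom_def by (intro avg_PiE_resample) auto
  finally show ?thesis
    unfolding H_def by (simp only: avg_swap[of _ "Ddom k dims"])
qed

lemma avg_mderivs_resample_pair:
  assumes "i < j" "j < r - 1"
  shows "avg (Adom r k dims) (\<lambda>a. avg (Ddom k dims) (\<lambda>d. avg (Gsum k dims) (\<lambda>x.
      mderivs (map a [0..<r-1] @ map d [0..<k]) f x * omega_pow (\<psi> a d)))) =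
    avg (Adom r k dims) (\<lambda>a. avg (Ddom k dims) (\<lambda>d. avg (Gsum k dims) (\<lambda>v. avg (Gsum k dims) (\<lambda>u.
      avg (Gsum k dims) (\<lambda>x.
        mderiv u (mderiv v (mderivs (map a [m\<leftarrow>[0..<r-1]. m \<noteq> i \<and> m \<noteq> j] @ map d [0..<k]) f)) x *
        omega_pow (\<psi> (a(j := v, i := u)) d))))))"
  using assms by (subst avg_Adom_resample_pair[of i r j]) (simp_all add: mderivs_map_upd_two)

lemma bias_transpose_eq:
  fixes \<psi> :: "(nat \<Rightarrow> 'p::prime_card vec) \<Rightarrow> (nat \<Rightarrow> 'p vec) \<Rightarrow> 'p mod_ring"
  assumes "multilinear_form r k dims \<psi>" "i < j" "j < r - 1"
  shows "bias r k dims (\<lambda>a d. \<psi> a d - \<psi> (a \<circ> Transposition.transpose i j) d) =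
    avg (Adom r k dims) (\<lambda>a. avg (Ddom k dims) (\<lambda>d. of_real
      (card (biadditive_form.alt_kernel (Gsum k dims) (\<lambda>u v. \<psi> (a(j := v, i := u)) d)) /
       card (Gsum k dims :: 'p vec set))))"
proof -
  have swap: "a(j := v, i := u) \<circ> Transposition.transpose i j = a(j := u, i := v)"
    for a :: "nat \<Rightarrow> 'p vec" and u v
    using assms by (auto simp: fun_eq_iff Transposition.transpose_def)
  have "bias r k dims (\<lambda>a d. \<psi> a d - \<psi> (a \<circ> Transposition.transpose i j) d) =
    avg (Adom r k dims) (\<lambda>a. avg (Ddom k dims) (\<lambda>d. avg (Gsum k dims) (\<lambda>v. avg (Gsum k dims) (\<lambda>u.
      omega_pow (\<psi> (a(j := v, i := u)) d - \<psi> (a(j := u, i := v)) d)))))"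
    unfolding bias_def using assms by (subst avg_Adom_resample_pair[of i r j]) (simp_all add: swap)
  also have "\<dots> = avg (Adom r k dims) (\<lambda>a. avg (Ddom k dims) (\<lambda>d. of_real
      (card (biadditive_form.alt_kernel (Gsum k dims) (\<lambda>u v. \<psi> (a(j := v, i := u)) d)) /
       card (Gsum k dims :: 'p vec set))))"
  proof (intro avg_cong refl)
    fix a d :: "nat \<Rightarrow> 'p vec" assume "a \<in> Adom r k dims" "d \<in> Ddom k dims"
    with assms interpret biadditive_form "Gsum k dims" "\<lambda>u v. \<psi> (a(j := v, i := u)) d"
      by (intro biadditive_form_slice) auto
    show "avg (Gsum k dims) (\<lambda>v. avg (Gsum k dims) (\<lambda>u.
        omega_pow (\<psi> (a(j := v, i := u)) d - \<psi> (a(j := u, i := v)) d))) =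
      of_real (card alt_kernel / card (Gsum k dims :: 'p vec set))"
      using avg_alt_character by simp
  qed
  finally show ?thesis .
qed

lemma norm_avg_slice_sq_le:
  fixes \<psi> :: "(nat \<Rightarrow> 'p::prime_card vec) \<Rightarrow> (nat \<Rightarrow> 'p vec) \<Rightarrow> 'p mod_ring"
  assumes f_le: "\<forall>x\<in>Gsum k dims. norm (f x) \<le> 1" and "multilinear_form r k dims \<psi>"
    and "i < j" "j < r - 1" and a: "a \<in> Adom r k dims" and d: "d \<in> Ddom k dims"
  shows "norm (avg (Gsum k dims) (\<lambda>v. avg (Gsum k dims) (\<lambda>u. avg (Gsum k dims) (\<lambda>x.
      mderiv u (mderiv v (mderivs (map a [m\<leftarrow>[0..<r-1]. m \<noteq> i \<and> m \<noteq> j] @ map d [0..<k]) f)) x *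
      omega_pow (\<psi> (a(j := v, i := u)) d)))))^2
    \<le> card (biadditive_form.alt_kernel (Gsum k dims) (\<lambda>u v. \<psi> (a(j := v, i := u)) d)) /
      card (Gsum k dims :: 'p vec set)"
proof -
  interpret finite_add_subgroup "Gsum k dims :: 'p vec set"
    by (rule finite_add_subgroup_Gsum)
  interpret biadditive_form "Gsum k dims" "\<lambda>u v. \<psi> (a(j := v, i := u)) d"
    using assms by (intro biadditive_form_slice) auto
  have "norm (mderivs (map a [m\<leftarrow>[0..<r-1]. m \<noteq> i \<and> m \<noteq> j] @ map d [0..<k]) f x) \<le> 1"
    if "x \<in> Gsum k dims" for x
    using that a d f_le
    by (intro norm_mderivs_le_1[of "Gsum k dims"]) (auto simp: Adom_mem Ddom_mem)
  from norm_avg_twisted_second_derivative_sq_le[OF this] show ?thesis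
    by (simp only: mderiv_mderiv)
qed

lemma norm_bias_le_1: "norm (bias r k dims \<psi>) \<le> 1"
  unfolding bias_def by (intro norm_avg_le_1) simp

theorem proposition27:
  fixes k r :: nat and dims :: "nat \<Rightarrow> nat"
    and f :: "'p::prime_card vec \<Rightarrow> complex"
    and \<xi> :: real
    and \<psi> :: "(nat \<Rightarrow> 'p vec) \<Rightarrow> (nat \<Rightarrow> 'p vec) \<Rightarrow> 'p mod_ring"
    and i j :: nat
  assumes "k \<ge> 1" and "r \<ge> 1"
    and "\<forall>x\<in>Gsum k dims. norm (f x) \<le> 1"
    and "\<xi> > 0"
    and "multilinear_form r k dims \<psi>"
    and hyp: "let E = avg (Adom r k dims) (\<lambda>a. avg (Ddom k dims) (\<lambda>d. avg (Gsum k dims) (\<lambda>x.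
                 mderivs (map a [0..<r-1] @ map d [0..<k]) f x * omega_pow (\<psi> a d))))
              in Im E = 0 \<and> Re E \<ge> \<xi>"
    and "i < j" and "j < r - 1"
  shows "let B = bias r k dims (\<lambda>a d. \<psi> a d - \<psi> (a \<circ> Transposition.transpose i j) d)
         in Im B = 0 \<and> Re B \<ge> \<xi> ^ 8"
proof -
  define E where "E = avg (Adom r k dims) (\<lambda>a. avg (Ddom k dims) (\<lambda>d. avg (Gsum k dims) (\<lambda>x.
                 mderivs (map a [0..<r-1] @ map d [0..<k]) f x * omega_pow (\<psi> a d))))"
  define B where "B = bias r k dims (\<lambda>a d. \<psi> a d - \<psi> (a \<circ> Transposition.transpose i j) d)"
  have "norm E ^ 2 \<le> Re B"
    unfolding E_def B_def avg_mderivs_resample_pair[OF assms(7,8)]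
      bias_transpose_eq[OF assms(5,7,8)]
    by (intro norm_avg_sq_le)
      (simp only: Re_complex_of_real norm_avg_slice_sq_le[OF assms(3,5,7,8)])
  moreover have "\<xi> \<le> norm E"
    using hyp complex_Re_le_cmod[of E] by (simp add: Let_def E_def)
  ultimately have "\<xi>^2 \<le> Re B"
    using \<open>\<xi> > 0\<close> by (meson less_imp_le order_trans power_mono)
  moreover have "Re B \<le> 1"
    using complex_Re_le_cmod[of B] norm_bias_le_1 unfolding B_def by (rule order_trans)
  ultimately have "\<xi>^8 \<le> Re B"
    using \<open>\<xi> > 0\<close> power_le_one_iff[of \<xi> 2] power_decreasing[of 2 8 \<xi>] by simp
  moreover have "Im B = 0"
    unfolding B_def bias_transpose_eq[OF assms(5,7,8)] by (simp add: Im_avg)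
  ultimately show ?thesis
    by (simp add: B_def)
qed

end
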